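(* Let $1\le l\le m$ and $0\le r<m-l$, and let $C=\Gamma_2G$ be the binary convolutional code generated by the semi-infinite matrix $G$ built from $G_0,\dots,G_{2^l-1}$ as described in the context. Then the free distance of the Euclidean dual $C^\perp$ equals $2^{r+1}$.
   Context: For $u,v\in\mathbf F_2^N$ the boolean product is $uv=(u_1v_1,\dots,u_Nv_N)$; a product of $i$ vectors has degree $i$. For $s\ge1$ let $b_0\in\mathbf F_2^{2^s}$ be the all-ones vector and for $1\le i\le s$ let $b_i\in\mathbf F_2^{2^s}$ be the concatenation of $2^{s-i}$ blocks $(\mathbf 0\,\mathbf 1)$, where $\mathbf 0,\mathbf 1\in\mathbf F_2^{2^{i-1}}$ are constant. Let $B_s^i$ be the matrix whose rows are all products of $i$ distinct elements of $\{b_1,\dots,b_s\}$ (with $B_s^0=b_0$; $B_s^i$ is empty for $i<0$ or $i>s$), and let $G_s^r$ be the matrix with rows $B_s^r,B_s^{r-1},\dots,B_s^0$ stacked (empty if $r<0$); it generates the Reed–Muller code $\mathcal R(r,s)$ of length $2^s$, dimension $\sum_{i=0}^r\binom si$, minimum distance $2^{s-r}$, with $\mathcal R(r,s)^\perp=\mathcal R(s-1-r,s)$. Let $w_j=(1,1,0,\dots,0)\in\mathbf F_2^{2^j}$ and $c\,w_j$ the concatenation of $c$ copies. For $0\le i\le l-1$ let $M_{i,l}=(2^{l-i-1}w_{i+1})\otimes B_{m-l}^{r-i}$ (Kronecker product; a $\binom{m-l}{r-i}\times2^m$ matrix) and $M_{l,l}=[G_{m-l}^{r-l}\ 0\ \cdots\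 0]$ ($2^m$ columns). Define $G_0,\dots,G_{2^l-1}$, each with $2^{m-l}$ columns, by $[G_0\ G_1\ \cdots\ G_{2^l-1}]$ = the matrix with row blocks $M_{0,l},\dots,M_{l,l}$ stacked. Then $G$ is the semi-infinite matrix whose $j$-th block row ($j\ge0$) has $G_0,G_1,\dots,G_{2^l-1}$ in block columns $j,j+1,\dots,j+2^l-1$ and zeros elsewhere. $\Gamma_2$ is the set of finitely supported binary sequences, $\Gamma_2G$ the set of finite linear combinations of rows of $G$, $C^\perp=\{u\in\Gamma_2:\sum_iu_iv_i=0\ \forall v\in C\}$; free distance = minimum number of nonzero entries of a nonzero element. *)

theory Defs
  imports Main
begin

text \<open>Binary vectors of F_2^N are bool lists (True = 1); binary sequences
  (elements of F_2^omega) are functions nat => bool, addition is pointwise xor.\<close>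

definition bvec :: "nat \<Rightarrow> nat \<Rightarrow> bool list" where
  "bvec s i = concat (replicate (2^(s-i))
       (replicate (2^(i-1)) False @ replicate (2^(i-1)) True))"

text \<open>Boolean (componentwise) product of the b_i, i in S; the empty product is b_0 = all ones.\<close>
definition bprod :: "nat \<Rightarrow> nat set \<Rightarrow> bool list" where
  "bprod s S = map (\<lambda>k. \<forall>i\<in>S. bvec s i ! k) [0..<2^s]"

text \<open>Rows of B_s^i: all products of i distinct elements of {b_1..b_s}
  (B_s^0 = b_0; empty for i<0 or i>s).\<close>
definition Brows :: "nat \<Rightarrow> int \<Rightarrow> bool list set" where
  "Brows s i = (if i < 0 \<or> i > int s then {}
     else {bprod s S | S. S \<subseteq> {1..s} \<and> int (card S) = i})"

text \<open>Rows of G_s^r (generator of R(r,s)); empty if r<0.\<close>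
definition Grows :: "nat \<Rightarrow> int \<Rightarrow> bool list set" where
  "Grows s r = (\<Union>i\<in>{0..r}. Brows s i)"

definition wvec :: "nat \<Rightarrow> bool list" where
  "wvec j = [True, True] @ replicate (2^j - 2) False"

definition wrep :: "nat \<Rightarrow> nat \<Rightarrow> bool list" where
  "wrep c j = concat (replicate c (wvec j))"

definition kron :: "bool list \<Rightarrow> bool list \<Rightarrow> bool list" where
  "kron a b = concat (map (\<lambda>x. map (\<lambda>y. x \<and> y) b) a)"

text \<open>Rows of the stacked matrix [G_0 G_1 ... G_(2^l-1)] = (M_{0,l}; ...; M_{l,l}).\<close>
definition Mrows :: "nat \<Rightarrow> nat \<Rightarrow> nat \<Rightarrow> bool list set" where
  "Mrows m l r =
     (\<Union>i\<in>{0..<l}. {kron (wrep (2^(l-i-1)) (i+1)) v | v. v \<in> Brows (m-l) (int r - int i)})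
     \<union> {v @ replicate (2^m - 2^(m-l)) False | v. v \<in> Grows (m-l) (int r - int l)}"

text \<open>Rows of the semi-infinite matrix G: the j-th block row places G_0..G_(2^l-1)
  in block columns j..j+2^l-1 (blocks of width 2^(m-l)), zeros elsewhere.\<close>
definition shift_row :: "nat \<Rightarrow> nat \<Rightarrow> bool list \<Rightarrow> nat \<Rightarrow> bool" where
  "shift_row n j v t = (j*n \<le> t \<and> t < j*n + length v \<and> v ! (t - j*n))"

definition Grows_inf :: "nat \<Rightarrow> nat \<Rightarrow> nat \<Rightarrow> (nat \<Rightarrow> bool) set" where
  "Grows_inf m l r = {shift_row (2^(m-l)) j v | j v. v \<in> Mrows m l r}"

definition Gamma2 :: "(nat \<Rightarrow> bool) set" where
  "Gamma2 = {u. finite {i. u i}}"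

definition xorv :: "(nat \<Rightarrow> bool) \<Rightarrow> (nat \<Rightarrow> bool) \<Rightarrow> nat \<Rightarrow> bool" where
  "xorv u v = (\<lambda>i. u i \<noteq> v i)"

inductive_set f2span :: "(nat \<Rightarrow> bool) set \<Rightarrow> (nat \<Rightarrow> bool) set" for R where
  zero: "(\<lambda>_. False) \<in> f2span R"
| add: "v \<in> R \<Longrightarrow> x \<in> f2span R \<Longrightarrow> xorv v x \<in> f2span R"

definition convcode :: "nat \<Rightarrow> nat \<Rightarrow> nat \<Rightarrow> (nat \<Rightarrow> bool) set" where
  "convcode m l r = f2span (Grows_inf m l r)"

definition dual_code :: "(nat \<Rightarrow> bool) set \<Rightarrow> (nat \<Rightarrow> bool) set" where
  "dual_code C = {u \<in> Gamma2. \<forall>v\<in>C. even (card {i. u i \<and> v i})}"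

definition weight :: "(nat \<Rightarrow> bool) \<Rightarrow> nat" where
  "weight u = card {i. u i}"

definition free_distance :: "(nat \<Rightarrow> bool) set \<Rightarrow> nat" where
  "free_distance C = Inf {weight u | u. u \<in> C \<and> u \<noteq> (\<lambda>_. False)}"

end

theory Submission
  imports Defs
begin

text \<open>The first block \<open>G\<^sub>0\<close> of \<open>G\<close> generates the Reed--Muller code \<open>R(r, m-l)\<close>, and
  block row \<open>j\<close> of \<open>G\<close> starts in block column \<open>j\<close>. Hence a word supported in the first
  block lies in \<open>C\<^sup>\<bottom>\<close> as soon as it is orthogonal to \<open>R(r, m-l)\<close>; the indicator of the
  subcube \<open>{0..<2^(r+1)}\<close> is such a word. Conversely, restricting a nonzero \<open>u \<in> C\<^sup>\<bottom>\<close>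
  to the last block meeting its support gives a nonzero word orthogonal to \<open>R(r, m-l)\<close>,
  because the copy of \<open>G\<^sub>0\<close> in that block is the only part of its block row that meets
  the support of \<open>u\<close>. Such a word has weight at least \<open>2^(r+1)\<close>: by induction on \<open>r\<close>,
  splitting its support along a coordinate on which two of its points differ.\<close>

lemma even_card_if_flip_bit_closed:
  fixes X :: "nat set"
  assumes "finite X" and closed: "\<And>k. k \<in> X \<Longrightarrow> flip_bit p k \<in> X"
  shows "even (card X)"
proof -
  define X0 where "X0 = {k\<in>X. \<not> bit k p}"
  define X1 where "X1 = {k\<in>X. bit k p}"
  have "X = X0 \<union> X1" "X0 \<inter> X1 = {}"
    by (auto simp: X0_def X1_def)
  then have "card X = card X0 + card X1"
    using assms(1) by (metis card_Un_disjoint finite_Un)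
  have flip_flip: "flip_bit p (flip_bit p k) = k" for k :: nat
    by (rule bit_eqI) (auto simp: bit_flip_bit_iff)
  have "bij_betw (flip_bit p) X0 X1"
    by (rule bij_betw_byWitness[where f' = "flip_bit p"])
      (auto simp: X0_def X1_def flip_flip bit_flip_bit_iff closed)
  then have "card X0 = card X1"
    by (rule bij_betw_same_card)
  with \<open>card X = card X0 + card X1\<close> show ?thesis
    by simp
qed

text \<open>Position \<open>k < 2^s\<close> is read as a binary word: there \<open>b\<^sub>i\<close> has entry bit \<open>i - 1\<close> of
  \<open>k\<close> (lemma \<open>bvec_nth\<close>), so \<open>monomial T k\<close> is the entry of the row \<open>bprod s T\<close>, and
  \<open>RM_orthogonal s r A\<close> says that \<open>A \<subseteq> {..<2^s}\<close> is the support of a word of \<open>R(r,s)\<^sup>\<bottom>\<close>.\<close>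

definition monomial :: "nat set \<Rightarrow> nat \<Rightarrow> bool" where
  "monomial T k \<longleftrightarrow> (\<forall>i\<in>T. bit k (i - 1))"

definition RM_orthogonal :: "nat \<Rightarrow> nat \<Rightarrow> nat set \<Rightarrow> bool" where
  "RM_orthogonal s r A \<longleftrightarrow>
     (\<forall>T. T \<subseteq> {1..s} \<and> card T \<le> r \<longrightarrow> even (card {k\<in>A. monomial T k}))"

lemma RM_orthogonal_lessThan: "RM_orthogonal s r {..<2^(r+1)}"
  unfolding RM_orthogonal_def
proof (intro allI impI, elim conjE)
  fix T assume T: "T \<subseteq> {1..s}" "card T \<le> r"
  have "\<not> Suc ` {..r} \<subseteq> T"
    using card_mono[OF finite_subset[OF T(1) finite_atLeastAtMost], of "Suc ` {..r}"] T(2)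
    by (auto simp: card_image)
  then obtain p where p: "p \<le> r" "Suc p \<notin> T"
    by blast
  show "even (card {k\<in>{..<2^(r+1)}. monomial T k})"
  proof (rule even_card_if_flip_bit_closed)
    fix k assume k: "k \<in> {k\<in>{..<2^(r+1)}. monomial T k}"
    then have "flip_bit p k = take_bit (r+1) (flip_bit p k)"
      using p(1) take_bit_nat_eq_self_iff[of "r+1" k] by (simp add: take_bit_flip_bit_eq)
    then have "flip_bit p k < 2^(r+1)"
      by (metis take_bit_nat_less_exp)
    moreover have "bit (flip_bit p k) (i - 1)" if "i \<in> T" for i
      using that k p(2) T(1) by (auto simp: bit_flip_bit_iff monomial_def)
    ultimately show "flip_bit p k \<in> {k\<in>{..<2^(r+1)}. monomial T k}"
      by (simp add: monomial_def)
  qed simp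
qed

lemma RM_orthogonal_even_card: "RM_orthogonal s r A \<Longrightarrow> even (card A)"
  unfolding RM_orthogonal_def by (drule spec[of _ "{}"]) (simp add: monomial_def)

lemma RM_orthogonal_restrict_bit:
  assumes "RM_orthogonal s (Suc r) A" and "t < s"
  shows "RM_orthogonal s r {k\<in>A. bit k t}"
  unfolding RM_orthogonal_def
proof (intro allI impI, elim conjE)
  fix T assume T: "T \<subseteq> {1..s}" "card T \<le> r"
  have "{k\<in>{k\<in>A. bit k t}. monomial T k} = {k\<in>A. monomial (insert (Suc t) T) k}"
    by (auto simp: monomial_def)
  moreover have "card (insert (Suc t) T) \<le> Suc r"
    using T finite_subset[OF T(1)] by (simp add: card_insert_if)
  ultimately show "even (card {k\<in>{k\<in>A. bit k t}. monomial T k})"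
    using assms T(1) unfolding RM_orthogonal_def by auto
qed

lemma RM_orthogonal_Diff:
  assumes "RM_orthogonal s r A" "RM_orthogonal s r B" "B \<subseteq> A" "finite A"
  shows "RM_orthogonal s r (A - B)"
  unfolding RM_orthogonal_def
proof (intro allI impI)
  fix T assume T: "T \<subseteq> {1..s} \<and> card T \<le> r"
  have "{k\<in>A - B. monomial T k} = {k\<in>A. monomial T k} - {k\<in>B. monomial T k}"
    by auto
  moreover have "card ({k\<in>A. monomial T k} - {k\<in>B. monomial T k})
      = card {k\<in>A. monomial T k} - card {k\<in>B. monomial T k}"
    using assms(3,4) by (intro card_Diff_subset) (auto intro: finite_subset)
  moreover have "card {k\<in>B. monomial T k} \<le> card {k\<in>A. monomial T k}"
    using assms(3,4) by (intro card_mono) auto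
  ultimately show "even (card {k\<in>A - B. monomial T k})"
    using assms(1,2) T unfolding RM_orthogonal_def by (simp add: even_diff_nat)
qed

lemma RM_orthogonal_card_ge:
  assumes "A \<subseteq> {..<2^s}" "A \<noteq> {}" "RM_orthogonal s r A"
  shows "2^(r+1) \<le> card A"
  using assms
proof (induction r arbitrary: A)
  case 0
  then have "card A \<noteq> 0" "even (card A)"
    using finite_subset[OF 0(1)] RM_orthogonal_even_card by auto
  then show ?case
    by (simp; presburger)
next
  case (Suc r)
  have "finite A"
    using Suc.prems(1) finite_subset by blast
  have "card A \<noteq> 0" "even (card A)"
    using \<open>finite A\<close> Suc.prems(2,3) RM_orthogonal_even_card by auto
  then have "\<not> card A \<le> 1"
    by presburger
  then obtain a b where ab: "a \<in> A" "b \<in> A" "a \<noteq> b"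
    using card_le_Suc0_iff_eq[OF \<open>finite A\<close>] by auto
  then obtain t where t: "bit a t \<noteq> bit b t"
    using bit_eq_iff by blast
  have "t < s"
    using t ab Suc.prems(1) by (metis bit_take_bit_iff lessThan_iff subsetD take_bit_nat_eq_self_iff)
  define A1 where "A1 = {k\<in>A. bit k t}"
  have "RM_orthogonal s r A1"
    unfolding A1_def using Suc.prems(3) \<open>t < s\<close> by (rule RM_orthogonal_restrict_bit)
  moreover have "RM_orthogonal s r A"
    using Suc.prems(3) by (simp add: RM_orthogonal_def)
  then have "RM_orthogonal s r (A - A1)"
    using \<open>finite A\<close> \<open>RM_orthogonal s r A1\<close> by (intro RM_orthogonal_Diff) (auto simp: A1_def)
  moreover have "A1 \<noteq> {}" "A - A1 \<noteq> {}"
    using ab t by (auto simp: A1_def)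
  moreover have "A1 \<subseteq> {..<2^s}" "A - A1 \<subseteq> {..<2^s}"
    using Suc.prems(1) by (auto simp: A1_def)
  ultimately have "2^(r+1) \<le> card A1" "2^(r+1) \<le> card (A - A1)"
    using Suc.IH by blast+
  moreover have "card A = card A1 + card (A - A1)"
    using \<open>finite A\<close> by (simp add: A1_def card_Diff_subset card_mono)
  ultimately show ?case
    by simp
qed

lemma nth_concat_replicate:
  "length xs = n \<Longrightarrow> k < c * n \<Longrightarrow> concat (replicate c xs) ! k = xs ! (k mod n)"
proof (induction c arbitrary: k)
  case (Suc c)
  show ?case
  proof (cases "k < n")
    case False
    then have "concat (replicate (Suc c) xs) ! k = xs ! ((k - n) mod n)"
      using Suc by (simp add: nth_append)
    with False show ?thesis
      by (simp add: mod_if)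
  qed (use Suc.prems in \<open>simp add: nth_append\<close>)
qed simp

lemma bvec_nth:
  assumes "1 \<le> i" "i \<le> s" "k < 2^s"
  shows "bvec s i ! k = bit k (i - 1)"
proof -
  define h :: nat where "h = 2^(i-1)"
  have "2 * h = 2^i" and "2^(s-i) * 2^i = (2::nat)^s"
    using assms(1,2) by (simp_all add: h_def power_add[symmetric] power_Suc[symmetric])
  then have "bvec s i ! k = (replicate h False @ replicate h True) ! (k mod 2^i)"
    unfolding bvec_def h_def[symmetric] using assms(3) by (intro nth_concat_replicate) simp_all
  also have "\<dots> \<longleftrightarrow> h \<le> take_bit i k"
  proof -
    have "k mod 2^i < h + h"
      using \<open>2 * h = 2^i\<close> by (metis mod_less_divisor mult_2 zero_less_numeral zero_less_power)
    then show ?thesis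
      by (simp add: nth_append take_bit_eq_mod)
  qed
  also have "\<dots> \<longleftrightarrow> bit k (i - 1)"
    using assms(1) take_bit_Suc_from_most[of "i - 1" k] take_bit_nat_less_exp[of "i - 1" k]
    by (cases "bit k (i - 1)") (simp_all add: h_def not_le)
  finally show ?thesis .
qed

lemma length_bprod [simp]: "length (bprod s S) = 2^s"
  by (simp add: bprod_def)

lemma bprod_nth:
  assumes "S \<subseteq> {1..s}" "k < 2^s"
  shows "bprod s S ! k = monomial S k"
proof -
  have "bvec s i ! k = bit k (i - 1)" if "i \<in> S" for i
    using that assms by (intro bvec_nth) auto
  with assms(2) show ?thesis
    by (simp add: bprod_def monomial_def)
qed

lemma take_kron_wrep: "0 < c \<Longrightarrow> take (length v) (kron (wrep c j) v) = v"
  by (cases c) (simp_all add: kron_def wrep_def wvec_def map_idI)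

lemma Brows_eq: "Brows s i = {bprod s S | S. S \<subseteq> {1..s} \<and> int (card S) = i}"
  unfolding Brows_def by (auto dest: card_mono[OF finite_atLeastAtMost])

lemma Grows_eq: "Grows s i = {bprod s S | S. S \<subseteq> {1..s} \<and> int (card S) \<le> i}"
  unfolding Grows_def Brows_eq by force

lemma take_Mrows:
  "take (2^(m-l)) ` Mrows m l r = {bprod (m-l) S | S. S \<subseteq> {1..m-l} \<and> card S \<le> r}"
    (is "?lhs = ?rhs")
proof
  show "?lhs \<subseteq> ?rhs"
  proof (rule image_subsetI)
    fix w assume "w \<in> Mrows m l r"
    then consider
        (kron) i v where "i < l" "v \<in> Brows (m-l) (int r - int i)"
          "w = kron (wrep (2^(l-i-1)) (i+1)) v"
      | (pad) v where "v \<in> Grows (m-l) (int r - int l)" "w = v @ replicate (2^m - 2^(m-l)) False"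
      unfolding Mrows_def by (elim UnE UN_E CollectE exE conjE) auto
    then show "take (2^(m-l)) w \<in> ?rhs"
    proof cases
      case kron
      then obtain S where S: "S \<subseteq> {1..m-l}" "int (card S) = int r - int i" "v = bprod (m-l) S"
        unfolding Brows_eq by blast
      then have "take (2^(m-l)) w = bprod (m-l) S"
        using kron(3) take_kron_wrep[of "2^(l-i-1)" v "i+1"] by simp
      with S show ?thesis
        by (intro CollectI exI[of _ S]) simp
    next
      case pad
      then obtain S where S: "S \<subseteq> {1..m-l}" "int (card S) \<le> int r - int l" "v = bprod (m-l) S"
        unfolding Grows_eq by blast
      then have "take (2^(m-l)) w = bprod (m-l) S"
        using pad(2) by simp
      with S show ?thesis
        by (intro CollectI exI[of _ S]) simp
    qed
  qed
next
  show "?rhs \<subseteq> ?lhs"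
  proof clarify
    fix S assume S: "S \<subseteq> {1..m-l}" "card S \<le> r"
    show "bprod (m-l) S \<in> ?lhs"
    proof (cases "r - card S < l")
      case True
      define i where "i = r - card S"
      have "bprod (m-l) S \<in> Brows (m-l) (int r - int i)"
        using S unfolding Brows_eq i_def by (intro CollectI exI[of _ S]) simp
      then have "kron (wrep (2^(l-i-1)) (i+1)) (bprod (m-l) S) \<in> Mrows m l r"
        unfolding Mrows_def using True by (intro UnI1 UN_I[of i]) (auto simp: i_def)
      moreover have "take (2^(m-l)) (kron (wrep (2^(l-i-1)) (i+1)) (bprod (m-l) S)) = bprod (m-l) S"
        using take_kron_wrep[of "2^(l-i-1)" "bprod (m-l) S" "i+1"] by simp
      ultimately show ?thesis
        by (blast intro: image_eqI[OF sym])
    next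
      case False
      then have "bprod (m-l) S \<in> Grows (m-l) (int r - int l)"
        using S unfolding Grows_eq by (intro CollectI exI[of _ S]) simp
      then have "bprod (m-l) S @ replicate (2^m - 2^(m-l)) False \<in> Mrows m l r"
        unfolding Mrows_def by (intro UnI2) auto
      moreover have "take (2^(m-l)) (bprod (m-l) S @ replicate (2^m - 2^(m-l)) False) = bprod (m-l) S"
        by simp
      ultimately show ?thesis
        by (blast intro: image_eqI[OF sym])
    qed
  qed
qed

lemma even_card_xorv_iff:
  assumes "finite {i. u i}"
  shows "even (card {i. u i \<and> xorv v w i})
    \<longleftrightarrow> (even (card {i. u i \<and> v i}) \<longleftrightarrow> even (card {i. u i \<and> w i}))"
proof -
  let ?F = "{i. u i}"
  have "{i. u i \<and> xorv v w i} = {i\<in>?F. odd (of_bool (v i) + of_bool (w i) :: nat)}"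
    by (auto simp: xorv_def)
  then have "even (card {i. u i \<and> xorv v w i}) \<longleftrightarrow> even (\<Sum>i\<in>?F. of_bool (v i) + of_bool (w i) :: nat)"
    using assms by (simp add: even_sum_iff)
  also have "\<dots> \<longleftrightarrow> even (card {i. u i \<and> v i} + card {i. u i \<and> w i})"
    using assms by (simp add: sum.distrib Collect_conj_eq)
  finally show ?thesis
    by simp
qed

lemma dual_code_f2span:
  "dual_code (f2span R) = {u \<in> Gamma2. \<forall>v\<in>R. even (card {i. u i \<and> v i})}"
proof (intro set_eqI iffI)
  fix u assume "u \<in> dual_code (f2span R)"
  moreover have "v \<in> f2span R" if "v \<in> R" for v
    using f2span.add[OF that f2span.zero] by (simp add: xorv_def)
  ultimately show "u \<in> {u \<in> Gamma2. \<forall>v\<in>R. even (card {i. u i \<and> v i})}"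
    by (simp add: dual_code_def)
next
  fix u assume u: "u \<in> {u \<in> Gamma2. \<forall>v\<in>R. even (card {i. u i \<and> v i})}"
  have "even (card {i. u i \<and> v i})" if "v \<in> f2span R" for v
    using that
  proof (induction rule: f2span.induct)
    case (add v x)
    then show ?case
      using u even_card_xorv_iff[of u v x] by (simp add: Gamma2_def)
  qed simp
  with u show "u \<in> dual_code (f2span R)"
    by (simp add: dual_code_def)
qed

lemma shift_row_inter_eq:
  assumes "take n x = y" "length y = n" "\<And>i. u i \<Longrightarrow> i < j * n + n"
  shows "{i. u i \<and> shift_row n j x i} = (+) (j * n) ` {k. k < n \<and> u (j * n + k) \<and> y ! k}"
proof -
  have len: "n \<le> length x" and nth: "\<And>k. k < n \<Longrightarrow> x ! k = y ! k"
    using assms(1,2) by auto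
  show ?thesis
  proof (intro set_eqI iffI)
    fix i assume "i \<in> {i. u i \<and> shift_row n j x i}"
    then have "j * n \<le> i" "i < j * n + n" "u i" "x ! (i - j * n)"
      using assms(3) by (auto simp: shift_row_def)
    then show "i \<in> (+) (j * n) ` {k. k < n \<and> u (j * n + k) \<and> y ! k}"
      using nth by (intro image_eqI[of _ _ "i - j * n"]) auto
  next
    fix i assume "i \<in> (+) (j * n) ` {k. k < n \<and> u (j * n + k) \<and> y ! k}"
    then show "i \<in> {i. u i \<and> shift_row n j x i}"
      using len nth by (auto simp: shift_row_def)
  qed
qed

lemma Mrows_first_blockE:
  assumes "x \<in> Mrows m l r"
  obtains S where "S \<subseteq> {1..m-l}" "card S \<le> r" "take (2^(m-l)) x = bprod (m-l) S"
  using imageI[OF assms, of "take (2^(m-l))"] unfolding take_Mrows by blast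

lemma Mrows_with_first_blockE:
  assumes "S \<subseteq> {1..m-l}" "card S \<le> r"
  obtains x where "x \<in> Mrows m l r" "take (2^(m-l)) x = bprod (m-l) S"
proof -
  have "bprod (m-l) S \<in> take (2^(m-l)) ` Mrows m l r"
    unfolding take_Mrows using assms by blast
  then obtain x where "x \<in> Mrows m l r" "bprod (m-l) S = take (2^(m-l)) x"
    by (rule imageE)
  then show ?thesis
    by (intro that) simp_all
qed

lemma RM_orthogonal_last_block:
  fixes m l r J :: nat and u :: "nat \<Rightarrow> bool"
  defines "n \<equiv> 2^(m-l)"
  assumes u: "u \<in> dual_code (convcode m l r)" and below: "\<And>i. u i \<Longrightarrow> i < J * n + n"
  shows "RM_orthogonal (m-l) r {k. k < n \<and> u (J * n + k)}"
  unfolding RM_orthogonal_def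
proof (intro allI impI, elim conjE)
  fix T assume T: "T \<subseteq> {1..m-l}" "card T \<le> r"
  then obtain x where x: "x \<in> Mrows m l r" "take n x = bprod (m-l) T"
    unfolding n_def by (rule Mrows_with_first_blockE)
  have "shift_row n J x \<in> Grows_inf m l r"
    using x(1) unfolding Grows_inf_def n_def by blast
  then have "even (card {i. u i \<and> shift_row n J x i})"
    using u unfolding convcode_def dual_code_f2span by blast
  also have "{i. u i \<and> shift_row n J x i}
      = (+) (J * n) ` {k. k < n \<and> u (J * n + k) \<and> bprod (m-l) T ! k}"
    using x(2) below by (intro shift_row_inter_eq) (simp_all add: n_def)
  also have "{k. k < n \<and> u (J * n + k) \<and> bprod (m-l) T ! k}
      = {k \<in> {k. k < n \<and> u (J * n + k)}. monomial T k}"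
    using T(1) by (auto simp: n_def bprod_nth)
  finally show "even (card {k \<in> {k. k < n \<and> u (J * n + k)}. monomial T k})"
    by (simp add: card_image)
qed

lemma in_dual_code_if_first_block:
  assumes below: "\<And>i. u i \<Longrightarrow> i < 2^(m-l)" and orth: "RM_orthogonal (m-l) r {i. u i}"
  shows "u \<in> dual_code (convcode m l r)"
  unfolding convcode_def dual_code_f2span
proof (intro CollectI conjI ballI)
  show "u \<in> Gamma2"
    using below finite_subset[of "{i. u i}" "{..<2^(m-l)}"] by (auto simp: Gamma2_def)
  fix v assume "v \<in> Grows_inf m l r"
  then obtain j x where x: "x \<in> Mrows m l r" and v: "v = shift_row (2^(m-l)) j x"
    unfolding Grows_inf_def by blast
  obtain S where S: "S \<subseteq> {1..m-l}" "card S \<le> r" "take (2^(m-l)) x = bprod (m-l) S"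
    using x by (rule Mrows_first_blockE)
  show "even (card {i. u i \<and> v i})"
  proof (cases "j = 0")
    case True
    have "{i. u i \<and> v i} = (+) 0 ` {k. k < 2^(m-l) \<and> u k \<and> bprod (m-l) S ! k}"
      using shift_row_inter_eq[OF S(3)] below unfolding v True by simp
    also have "\<dots> = {k \<in> {i. u i}. monomial S k}"
      using below S(1) by (auto simp: bprod_nth)
    finally show ?thesis
      using orth S(1,2) unfolding RM_orthogonal_def by simp
  next
    case False
    then have "2^(m-l) \<le> j * 2^(m-l)"
      by simp
    have "\<not> v i" if "u i" for i
    proof -
      have "i < j * 2^(m-l)"
        using below[OF that] \<open>2^(m-l) \<le> j * 2^(m-l)\<close> by linarith
      then show ?thesis
        by (simp add: v shift_row_def)
    qed
    then have "{i. u i \<and> v i} = {}"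
      by blast
    then show ?thesis
      by (metis card.empty dvd_0_right)
  qed
qed

lemma dual_code_weight_ge:
  assumes "u \<in> dual_code (convcode m l r)" "u \<noteq> (\<lambda>_. False)"
  shows "2^(r+1) \<le> weight u"
proof -
  define n :: nat where "n = 2^(m-l)"
  have fin: "finite {i. u i}"
    using assms(1) by (simp add: dual_code_def Gamma2_def)
  have ne: "{i. u i} \<noteq> {}"
    using assms(2) by auto
  define J where "J = Max {i. u i} div n"
  have "Max {i. u i} mod n < n"
    by (simp add: n_def)
  then have last: "Max {i. u i} < J * n + n"
    unfolding J_def using div_mult_mod_eq[of "Max {i. u i}" n] by linarith
  have below: "i < J * n + n" if "u i" for i
    using Max_ge[OF fin, of i] that last by simp
  define A where "A = {k. k < n \<and> u (J * n + k)}"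
  have "Max {i. u i} mod n \<in> A"
    using Max_in[OF fin ne] unfolding A_def J_def n_def by (simp add: div_mult_mod_eq)
  then have "A \<noteq> {}"
    by blast
  moreover have "RM_orthogonal (m-l) r A"
    unfolding A_def n_def using assms(1) below[unfolded n_def] by (rule RM_orthogonal_last_block)
  ultimately have "2^(r+1) \<le> card A"
    by (intro RM_orthogonal_card_ge) (auto simp: A_def n_def)
  also have "card A = card ((+) (J * n) ` A)"
    by (simp add: card_image)
  also have "\<dots> \<le> weight u"
    unfolding weight_def using fin by (intro card_mono) (auto simp: A_def)
  finally show ?thesis .
qed

theorem mainTheorem11:
  fixes m l r :: nat
  assumes "1 \<le> l" and "l \<le> m" and "r < m - l"
  shows "free_distance (dual_code (convcode m l r)) = 2 ^ (r + 1)"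
proof -
  define u0 :: "nat \<Rightarrow> bool" where "u0 i \<longleftrightarrow> i < 2^(r+1)" for i
  have "2^(r+1) \<le> (2::nat)^(m-l)"
    using assms(3) by (intro power_increasing) auto
  then have "u0 \<in> dual_code (convcode m l r)"
    using RM_orthogonal_lessThan[of "m-l" r]
    by (intro in_dual_code_if_first_block) (auto simp: u0_def lessThan_def)
  moreover have "u0 \<noteq> (\<lambda>_. False)"
    by (metis u0_def zero_less_numeral zero_less_power)
  moreover have "weight u0 = 2^(r+1)"
    by (simp add: u0_def weight_def)
  ultimately have "2^(r+1) \<in> {weight u | u. u \<in> dual_code (convcode m l r) \<and> u \<noteq> (\<lambda>_. False)}"
    by force
  then show ?thesis
    unfolding free_distance_def using dual_code_weight_ge by (intro cInf_eq_minimum) blast+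
qed

end
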